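(* Let $R=(r_{i,j})_{i,j=0}^{n-1}$ be a complex Hermitian positive definite matrix, and let $0\le s<d\le n-1$. Let $M={}^0R^{s,d}$ be the $n\times n$ matrix with entries $M_{i,j}=r_{i,j}$ if $s\le i,j\le d$ and $M_{i,j}=0$ otherwise. Then for all $s\le k<l\le d$, the quantities $p^M_{k,l},q^M_{k,l},a^M_{k,l},a'^M_{k,l},v^M_{k,l},v'^M_{k,l}$ obtained by running the generalized reflection coefficient recursion on $M$ are well defined and $$\big(p^M_{k,l},q^M_{k,l},a^M_{k,l},a'^M_{k,l},v^M_{k,l},v'^M_{k,l}\big)=\big(p^R_{k,l},q^R_{k,l},a^R_{k,l},a'^R_{k,l},v^R_{k,l},v'^R_{k,l}\big).$$
   Context: Generalized reflection coefficient recursion for a complex $n\times n$ matrix $M$ (indices $0,\dots,n-1$; $e_0,\dots,e_{n-1}$ the canonical basis column vectors of $\mathbb{C}^n$): set $p^M_{k,k}=q^M_{k,k}=e_k$ for all $k$; define $v^M_{k,l}:=(q^M_{k,l})^TMe_l$ and $v'^M_{k,l}:=(p^M_{k,l})^TMe_k$; and for $0\le k<l\le n-1$, recursively in $l-k$, $a^M_{k,l}=\dfrac{(p^M_{k,l-1})^TMe_l}{v^M_{k+1,l}}$, $a'^M_{k,l}=\dfrac{(q^M_{k+1,l})^TMe_k}{v'^M_{k,l-1}}$, $p^M_{k,l}=p^M_{k,l-1}-a^M_{k,l}q^M_{k+1,l}$, $q^M_{k,l}=q^M_{k+1,l}-a'^M_{k,l}p^M_{k,l-1}$ (the quantities are well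 defined when the denominators involved are nonzero; for Hermitian positive definite $M$ they are positive reals). The superscript $R$ denotes the same quantities computed for $M=R$. *)

theory Defs
  imports Complex_Main
begin

definition evec :: "nat \<Rightarrow> nat \<Rightarrow> complex" where
  "evec k = (\<lambda>i. if i = k then 1 else 0)"

text \<open>x^T M e_j  (plain transpose, no conjugation)\<close>
definition bil :: "nat \<Rightarrow> (nat \<Rightarrow> nat \<Rightarrow> complex) \<Rightarrow> (nat \<Rightarrow> complex) \<Rightarrow> nat \<Rightarrow> complex" where
  "bil n M x j = (\<Sum>i<n. x i * M i j)"

text \<open>The pair (p_{k,l}, q_{k,l}); for l <= k it is (e_k, e_k).
  Division by zero yields 0 in HOL, so well-definedness is stated separately.\<close>
function pq :: "nat \<Rightarrow> (nat \<Rightarrow> nat \<Rightarrow> complex) \<Rightarrow> nat \<Rightarrow> nat \<Rightarrow> (nat \<Rightarrow> complex) \<times> (nat \<Rightarrow> complex)" where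
  "pq n M k l =
    (if l \<le> k then (evec k, evec k)
     else (let p1 = fst (pq n M k (l - 1)); q2 = snd (pq n M (Suc k) l);
               a = bil n M p1 l / bil n M q2 l;
               a' = bil n M q2 k / bil n M p1 k
           in (\<lambda>i. p1 i - a * q2 i, \<lambda>i. q2 i - a' * p1 i)))"
  by pat_completeness auto
termination by (relation "measure (\<lambda>(n, M, k, l). l - k)") auto

definition pvec :: "nat \<Rightarrow> (nat \<Rightarrow> nat \<Rightarrow> complex) \<Rightarrow> nat \<Rightarrow> nat \<Rightarrow> nat \<Rightarrow> complex" where
  "pvec n M k l = fst (pq n M k l)"

definition qvec :: "nat \<Rightarrow> (nat \<Rightarrow> nat \<Rightarrow> complex) \<Rightarrow> nat \<Rightarrow> nat \<Rightarrow> nat \<Rightarrow> complex" where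
  "qvec n M k l = snd (pq n M k l)"

definition vv :: "nat \<Rightarrow> (nat \<Rightarrow> nat \<Rightarrow> complex) \<Rightarrow> nat \<Rightarrow> nat \<Rightarrow> complex" where
  "vv n M k l = bil n M (qvec n M k l) l"

definition vv' :: "nat \<Rightarrow> (nat \<Rightarrow> nat \<Rightarrow> complex) \<Rightarrow> nat \<Rightarrow> nat \<Rightarrow> complex" where
  "vv' n M k l = bil n M (pvec n M k l) k"

definition acoef :: "nat \<Rightarrow> (nat \<Rightarrow> nat \<Rightarrow> complex) \<Rightarrow> nat \<Rightarrow> nat \<Rightarrow> complex" where
  "acoef n M k l = bil n M (pvec n M k (l - 1)) l / vv n M (Suc k) l"

definition acoef' :: "nat \<Rightarrow> (nat \<Rightarrow> nat \<Rightarrow> complex) \<Rightarrow> nat \<Rightarrow> nat \<Rightarrow> complex" where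
  "acoef' n M k l = bil n M (qvec n M (Suc k) l) k / vv' n M k (l - 1)"

definition well_defined_at :: "nat \<Rightarrow> (nat \<Rightarrow> nat \<Rightarrow> complex) \<Rightarrow> nat \<Rightarrow> nat \<Rightarrow> bool" where
  "well_defined_at n M k l \<longleftrightarrow> vv n M (Suc k) l \<noteq> 0 \<and> vv' n M k (l - 1) \<noteq> 0"

definition hermitian_mat :: "nat \<Rightarrow> (nat \<Rightarrow> nat \<Rightarrow> complex) \<Rightarrow> bool" where
  "hermitian_mat n R \<longleftrightarrow> (\<forall>i<n. \<forall>j<n. R i j = cnj (R j i))"

definition pos_def_mat :: "nat \<Rightarrow> (nat \<Rightarrow> nat \<Rightarrow> complex) \<Rightarrow> bool" where
  "pos_def_mat n R \<longleftrightarrow> hermitian_mat n R \<and>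
     (\<forall>x :: nat \<Rightarrow> complex. (\<exists>i<n. x i \<noteq> 0) \<longrightarrow>
        (\<Sum>i<n. \<Sum>j<n. cnj (x i) * R i j * x j) \<in> \<real> \<and>
        Re (\<Sum>i<n. \<Sum>j<n. cnj (x i) * R i j * x j) > 0)"

definition trunc_mat :: "(nat \<Rightarrow> nat \<Rightarrow> complex) \<Rightarrow> nat \<Rightarrow> nat \<Rightarrow> nat \<Rightarrow> nat \<Rightarrow> complex" where
  "trunc_mat R s d = (\<lambda>i j. if s \<le> i \<and> i \<le> d \<and> s \<le> j \<and> j \<le> d then R i j else 0)"

end

theory Submission
  imports Defs
begin

(* The vectors p_{k,l} and q_{k,l} are supported on [k, l], have entry 1 at k resp. l, and
   satisfy p_{k,l}^T M e_j = 0 for k < j <= l and q_{k,l}^T M e_j = 0 for k <= j < l.  For a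
   positive definite R the quadratic form at the conjugate of q_{k,l} therefore collapses to
   v_{k,l}, which is thus nonzero (likewise v'_{k,l}), so the recursion never divides by zero.
   For indices in [s, d] all vectors involved are supported in [s, d] and are only paired with
   columns in [s, d], so the recursion never reads an entry of R outside [s, d] x [s, d]. *)

lemma pvec_base: "l \<le> k \<Longrightarrow> pvec n M k l = evec k"
  unfolding pvec_def by (subst pq.simps) simp

lemma qvec_base: "l \<le> k \<Longrightarrow> qvec n M k l = evec k"
  unfolding qvec_def by (subst pq.simps) simp

lemma pvec_step:
  "k < l \<Longrightarrow> pvec n M k l = (\<lambda>i. pvec n M k (l - 1) i - acoef n M k l * qvec n M (Suc k) l i)"
  unfolding pvec_def qvec_def acoef_def vv_def by (subst pq.simps) (simp add: Let_def)

lemma qvec_step: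
  "k < l \<Longrightarrow> qvec n M k l = (\<lambda>i. qvec n M (Suc k) l i - acoef' n M k l * pvec n M k (l - 1) i)"
  unfolding pvec_def qvec_def acoef'_def vv'_def by (subst pq.simps) (simp add: Let_def)

lemma bil_diff: "bil n M (\<lambda>i. x i - c * y i) j = bil n M x j - c * bil n M y j"
  unfolding bil_def by (simp add: sum_subtractf sum_distrib_left algebra_simps)

lemma pvec_qvec_outside:
  "k \<le> l \<Longrightarrow> i < k \<or> l < i \<Longrightarrow> pvec n M k l i = 0 \<and> qvec n M k l i = 0"
proof (induction n M k l rule: pq.induct)
  case (1 n M k l)
  show ?case
  proof (cases "k < l")
    case True
    with "1.IH" "1.prems" have "pvec n M k (l - 1) i = 0 \<and> qvec n M k (l - 1) i = 0"
      "pvec n M (Suc k) l i = 0 \<and> qvec n M (Suc k) l i = 0"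
      by auto
    then show ?thesis unfolding pvec_step[OF True] qvec_step[OF True] by simp
  next
    case False
    with "1.prems" show ?thesis by (auto simp: pvec_base qvec_base evec_def)
  qed
qed

definition pq_biorthogonal :: "nat \<Rightarrow> (nat \<Rightarrow> nat \<Rightarrow> complex) \<Rightarrow> nat \<Rightarrow> nat \<Rightarrow> bool" where
  "pq_biorthogonal n M k l \<longleftrightarrow> pvec n M k l k = 1 \<and> qvec n M k l l = 1 \<and>
     (\<forall>j. k < j \<and> j \<le> l \<longrightarrow> bil n M (pvec n M k l) j = 0) \<and>
     (\<forall>j. k \<le> j \<and> j < l \<longrightarrow> bil n M (qvec n M k l) j = 0)"

lemma pq_biorthogonal_step:
  assumes "k < l"
    and left: "pq_biorthogonal n M k (l - 1)" and right: "pq_biorthogonal n M (Suc k) l"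
    and "vv n M (Suc k) l \<noteq> 0" and "vv' n M k (l - 1) \<noteq> 0"
  shows "pq_biorthogonal n M k l"
proof -
  have "qvec n M (Suc k) l k = 0" "pvec n M k (l - 1) l = 0"
    using pvec_qvec_outside[of "Suc k" l k n M] pvec_qvec_outside[of k "l - 1" l n M] \<open>k < l\<close>
    by auto
  then have units: "pvec n M k l k = 1" "qvec n M k l l = 1"
    using left right unfolding pvec_step[OF \<open>k < l\<close>] qvec_step[OF \<open>k < l\<close>]
    by (simp_all add: pq_biorthogonal_def)
  have "bil n M (pvec n M k l) j = 0" if "k < j" "j \<le> l" for j
  proof (cases "j = l")
    case True
    have "bil n M (pvec n M k l) l = bil n M (pvec n M k (l - 1)) l - acoef n M k l * vv n M (Suc k) l"
      by (simp only: pvec_step[OF \<open>k < l\<close>] bil_diff vv_def)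
    with True assms(4) show ?thesis by (simp add: acoef_def)
  next
    case False
    with left right that show ?thesis
      unfolding pvec_step[OF \<open>k < l\<close>] by (simp add: bil_diff pq_biorthogonal_def)
  qed
  moreover have "bil n M (qvec n M k l) j = 0" if "k \<le> j" "j < l" for j
  proof (cases "j = k")
    case True
    have "bil n M (qvec n M k l) k = bil n M (qvec n M (Suc k) l) k - acoef' n M k l * vv' n M k (l - 1)"
      by (simp only: qvec_step[OF \<open>k < l\<close>] bil_diff vv'_def)
    with True assms(5) show ?thesis by (simp add: acoef'_def)
  next
    case False
    with left right that show ?thesis
      unfolding qvec_step[OF \<open>k < l\<close>] by (simp add: bil_diff pq_biorthogonal_def)
  qed
  ultimately show ?thesis using units by (simp add: pq_biorthogonal_def)
qed

(* The quadratic form of R at cnj x collapses to cnj (x j0) * (x^T R e_j0), hence is nonzero. *)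
lemma pos_def_bil_nonzero:
  assumes R: "pos_def_mat n R" and "j0 < n" and "x j0 \<noteq> 0"
    and others: "\<And>j. j < n \<Longrightarrow> j \<noteq> j0 \<Longrightarrow> x j * bil n R x j = 0"
  shows "bil n R x j0 \<noteq> 0"
proof -
  have "(\<Sum>i<n. \<Sum>j<n. cnj (cnj (x i)) * R i j * cnj (x j)) = (\<Sum>j<n. cnj (x j) * bil n R x j)"
    unfolding bil_def by (subst sum.swap) (simp add: sum_distrib_left algebra_simps)
  also have "\<dots> = (\<Sum>j<n. if j = j0 then cnj (x j0) * bil n R x j0 else 0)"
  proof (rule sum.cong[OF refl])
    fix j
    assume "j \<in> {..<n}"
    then show "cnj (x j) * bil n R x j = (if j = j0 then cnj (x j0) * bil n R x j0 else 0)"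
      using others[of j] by (cases "j = j0") auto
  qed
  also have "\<dots> = cnj (x j0) * bil n R x j0"
    using \<open>j0 < n\<close> by simp
  finally have form: "(\<Sum>i<n. \<Sum>j<n. cnj (cnj (x i)) * R i j * cnj (x j)) = cnj (x j0) * bil n R x j0" .
  from R have "Re (\<Sum>i<n. \<Sum>j<n. cnj (cnj (x i)) * R i j * cnj (x j)) > 0"
    unfolding pos_def_mat_def
  proof (elim conjE allE impE)
    show "\<exists>i<n. cnj (x i) \<noteq> 0" using \<open>j0 < n\<close> \<open>x j0 \<noteq> 0\<close> by auto
  qed simp
  then show ?thesis unfolding form by auto
qed

lemma vv_vv'_nonzero:
  assumes R: "pos_def_mat n R" and "k \<le> l" "l < n" and orth: "pq_biorthogonal n R k l"
  shows "vv n R k l \<noteq> 0" "vv' n R k l \<noteq> 0"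
proof -
  have outside: "pvec n R k l j = 0 \<and> qvec n R k l j = 0" if "\<not> (k \<le> j \<and> j \<le> l)" for j
    using pvec_qvec_outside[of k l j n R] \<open>k \<le> l\<close> that by auto
  show "vv n R k l \<noteq> 0"
    unfolding vv_def
  proof (rule pos_def_bil_nonzero[OF R \<open>l < n\<close>])
    show "qvec n R k l l \<noteq> 0" using orth by (simp add: pq_biorthogonal_def)
    show "qvec n R k l j * bil n R (qvec n R k l) j = 0" if "j \<noteq> l" for j
      using outside[of j] orth that by (cases "k \<le> j \<and> j \<le> l") (auto simp: pq_biorthogonal_def)
  qed
  show "vv' n R k l \<noteq> 0"
    unfolding vv'_def
  proof (rule pos_def_bil_nonzero[OF R])
    show "k < n" "pvec n R k l k \<noteq> 0" using orth assms(2,3) by (auto simp: pq_biorthogonal_def)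
    show "pvec n R k l j * bil n R (pvec n R k l) j = 0" if "j \<noteq> k" for j
      using outside[of j] orth that by (cases "k \<le> j \<and> j \<le> l") (auto simp: pq_biorthogonal_def)
  qed
qed

lemma pos_def_pq_biorthogonal:
  "pos_def_mat n R \<Longrightarrow> k \<le> l \<Longrightarrow> l < n \<Longrightarrow> pq_biorthogonal n R k l"
proof (induction n R k l rule: pq.induct)
  case (1 n R k l)
  show ?case
  proof (cases "k < l")
    case True
    with "1.IH" "1.prems" have left: "pq_biorthogonal n R k (l - 1)"
      and right: "pq_biorthogonal n R (Suc k) l"
      by auto
    have "vv n R (Suc k) l \<noteq> 0"
      using vv_vv'_nonzero(1)[OF _ _ _ right] True "1.prems" by simp
    moreover have "vv' n R k (l - 1) \<noteq> 0"
      using vv_vv'_nonzero(2)[OF _ _ _ left] True "1.prems" by simp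
    ultimately show ?thesis
      by (rule pq_biorthogonal_step[OF True left right])
  next
    case False
    with "1.prems" show ?thesis by (auto simp: pq_biorthogonal_def pvec_base qvec_base evec_def)
  qed
qed

lemma pos_def_well_defined_at:
  assumes "pos_def_mat n R" and "k < l" "l < n"
  shows "well_defined_at n R k l"
  using assms vv_vv'_nonzero pos_def_pq_biorthogonal unfolding well_defined_at_def by simp

lemma bil_trunc_mat:
  assumes "\<And>i. x i \<noteq> 0 \<Longrightarrow> s \<le> i \<and> i \<le> d" and "s \<le> j" "j \<le> d"
  shows "bil n (trunc_mat R s d) x j = bil n R x j"
  unfolding bil_def
proof (rule sum.cong[OF refl])
  fix i
  show "x i * trunc_mat R s d i j = x i * R i j"
  proof (cases "x i = 0")
    case False
    with assms(1) have "s \<le> i \<and> i \<le> d" by blast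
    with assms(2,3) show ?thesis by (simp add: trunc_mat_def)
  qed simp
qed

lemma bil_trunc_mat_pvec_qvec:
  assumes "s \<le> k" "k \<le> l" "l \<le> d" "s \<le> j" "j \<le> d"
  shows "bil n (trunc_mat R s d) (pvec n R k l) j = bil n R (pvec n R k l) j"
    and "bil n (trunc_mat R s d) (qvec n R k l) j = bil n R (qvec n R k l) j"
proof -
  have supp: "s \<le> i \<and> i \<le> d" if "pvec n R k l i \<noteq> 0 \<or> qvec n R k l i \<noteq> 0" for i
  proof -
    have "\<not> (i < k \<or> l < i)" using pvec_qvec_outside[of k l i n R] assms(2) that by auto
    with assms(1,3) show ?thesis by linarith
  qed
  show "bil n (trunc_mat R s d) (pvec n R k l) j = bil n R (pvec n R k l) j"
    by (rule bil_trunc_mat[OF _ assms(4,5)]) (use supp in blast)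
  show "bil n (trunc_mat R s d) (qvec n R k l) j = bil n R (qvec n R k l) j"
    by (rule bil_trunc_mat[OF _ assms(4,5)]) (use supp in blast)
qed

lemma pvec_qvec_trunc_mat:
  "s \<le> k \<Longrightarrow> k \<le> l \<Longrightarrow> l \<le> d \<Longrightarrow>
    pvec n (trunc_mat R s d) k l = pvec n R k l \<and> qvec n (trunc_mat R s d) k l = qvec n R k l"
proof (induction n R k l rule: pq.induct)
  case (1 n R k l)
  show ?case
  proof (cases "k < l")
    case True
    with "1.IH" "1.prems" have
      p: "pvec n (trunc_mat R s d) k (l - 1) = pvec n R k (l - 1)" and
      q: "qvec n (trunc_mat R s d) (Suc k) l = qvec n R (Suc k) l"
      by auto
    with True "1.prems" have
      a: "acoef n (trunc_mat R s d) k l = acoef n R k l" and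
      a': "acoef' n (trunc_mat R s d) k l = acoef' n R k l"
      by (simp_all add: acoef_def acoef'_def vv_def vv'_def bil_trunc_mat_pvec_qvec)
    show ?thesis
      unfolding pvec_step[OF True] qvec_step[OF True] p q a a' by simp
  next
    case False
    then show ?thesis by (simp add: pvec_base qvec_base)
  qed
qed

lemma vv_vv'_trunc_mat:
  assumes "s \<le> k" "k \<le> l" "l \<le> d"
  shows "vv n (trunc_mat R s d) k l = vv n R k l" "vv' n (trunc_mat R s d) k l = vv' n R k l"
proof -
  have "pvec n (trunc_mat R s d) k l = pvec n R k l" "qvec n (trunc_mat R s d) k l = qvec n R k l"
    using pvec_qvec_trunc_mat[OF assms] by simp_all
  moreover have "bil n (trunc_mat R s d) (qvec n R k l) l = bil n R (qvec n R k l) l"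
    "bil n (trunc_mat R s d) (pvec n R k l) k = bil n R (pvec n R k l) k"
    using assms by (simp_all add: bil_trunc_mat_pvec_qvec)
  ultimately show "vv n (trunc_mat R s d) k l = vv n R k l" "vv' n (trunc_mat R s d) k l = vv' n R k l"
    unfolding vv_def vv'_def by simp_all
qed

lemma acoef_acoef'_trunc_mat:
  assumes "s \<le> k" "k < l" "l \<le> d"
  shows "acoef n (trunc_mat R s d) k l = acoef n R k l"
    "acoef' n (trunc_mat R s d) k l = acoef' n R k l"
proof -
  have "pvec n (trunc_mat R s d) k (l - 1) = pvec n R k (l - 1)"
    "qvec n (trunc_mat R s d) (Suc k) l = qvec n R (Suc k) l"
    using assms pvec_qvec_trunc_mat[of s k "l - 1" d n R] pvec_qvec_trunc_mat[of s "Suc k" l d n R]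
    by simp_all
  moreover have "vv n (trunc_mat R s d) (Suc k) l = vv n R (Suc k) l"
    "vv' n (trunc_mat R s d) k (l - 1) = vv' n R k (l - 1)"
    using assms vv_vv'_trunc_mat(1)[of s "Suc k" l d n R] vv_vv'_trunc_mat(2)[of s k "l - 1" d n R]
    by simp_all
  moreover have "bil n (trunc_mat R s d) (pvec n R k (l - 1)) l = bil n R (pvec n R k (l - 1)) l"
    "bil n (trunc_mat R s d) (qvec n R (Suc k) l) k = bil n R (qvec n R (Suc k) l) k"
    using assms by (simp_all add: bil_trunc_mat_pvec_qvec)
  ultimately show "acoef n (trunc_mat R s d) k l = acoef n R k l"
    "acoef' n (trunc_mat R s d) k l = acoef' n R k l"
    unfolding acoef_def acoef'_def by simp_all
qed

lemma well_defined_at_trunc_mat: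
  assumes "s \<le> k" "k < l" "l \<le> d"
  shows "well_defined_at n (trunc_mat R s d) k l \<longleftrightarrow> well_defined_at n R k l"
  using assms vv_vv'_trunc_mat(1)[of s "Suc k" l d n R] vv_vv'_trunc_mat(2)[of s k "l - 1" d n R]
  unfolding well_defined_at_def by simp

theorem mainTheorem2:
  fixes n s d :: nat and R :: "nat \<Rightarrow> nat \<Rightarrow> complex"
  assumes "pos_def_mat n R"
    and "s < d" and "d \<le> n - 1"
  defines "M \<equiv> trunc_mat R s d"
  shows "\<forall>k l. s \<le> k \<and> k < l \<and> l \<le> d \<longrightarrow>
           well_defined_at n M k l \<and>
           pvec n M k l = pvec n R k l \<and> qvec n M k l = qvec n R k l \<and>
           acoef n M k l = acoef n R k l \<and> acoef' n M k l = acoef' n R k l \<and>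
           vv n M k l = vv n R k l \<and> vv' n M k l = vv' n R k l"
proof (intro allI impI, elim conjE)
  fix k l
  assume kl: "s \<le> k" "k < l" "l \<le> d"
  then have kl': "s \<le> k" "k \<le> l" "l \<le> d" by simp_all
  have "well_defined_at n R k l"
    using assms(1-3) kl by (intro pos_def_well_defined_at) auto
  then show "well_defined_at n M k l \<and>
           pvec n M k l = pvec n R k l \<and> qvec n M k l = qvec n R k l \<and>
           acoef n M k l = acoef n R k l \<and> acoef' n M k l = acoef' n R k l \<and>
           vv n M k l = vv n R k l \<and> vv' n M k l = vv' n R k l"
    unfolding M_def
    using well_defined_at_trunc_mat[OF kl] pvec_qvec_trunc_mat[OF kl'] vv_vv'_trunc_mat[OF kl']
      acoef_acoef'_trunc_mat[OF kl]
    by simp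
qed

end
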